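(* Let $q$ be a probability measure on $(0,\infty)$ (absolutely continuous part plus finitely many atoms, finite mean), $r^\star>0$, $\mathcal C_1=(0,r^\star]$, $\mathcal C_2=(r^\star,\infty)$, $p^i=q(\mathcal C_i)>0$, and $q^i(I)=q(I\cap\mathcal C_i)/p^i$ for $i=1,2$. Let $d>0$, write $\hat\nu(d)=\int e^{-dr}\nu(dr)$, and define $$\pi^i=p^i\frac{1-\hat q^i(d)}{1-\hat q(d)},\qquad \mu^{\rm in}=\frac{d}{1-\hat q(d)},\qquad \mu^{{\rm in},i}=\frac{d}{1-\hat q^i(d)}\quad(i=1,2).$$ Then $\pi^1\le p^1$, $\pi^2\ge p^2$, and $\mu^{{\rm in},2}\le\mu^{\rm in}\le\mu^{{\rm in},1}$. *)

theory Defs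
  imports "HOL-Probability.Probability"
begin

definition laplace :: "real measure \<Rightarrow> real \<Rightarrow> real" where
  "laplace \<nu> d = (\<integral>r. exp (- d * r) \<partial>\<nu>)"

definition cond_meas :: "real measure \<Rightarrow> real set \<Rightarrow> real measure" where
  "cond_meas q C = density q (\<lambda>x. ennreal (indicator C x / measure q C))"

end

theory Submission
  imports Defs
begin

(* Write L, L1, L2 for the Laplace transforms at d of q, q1, q2. Splitting the integral
   over the two cells gives L = p1 L1 + p2 L2 with p1 + p2 = 1, and since exp (- d r) is
   decreasing and below 1 for r > 0, L2 <= exp (- d rstar) <= L1 < 1. Hence L lies between
   L2 and L1, and all four inequalities follow from the monotonicity of x |-> 1 / (1 - x)
   below 1. *)

lemma sets_cond_meas [simp, measurable_cong]: "sets (cond_meas q C) = sets q"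
  by (simp add: cond_meas_def)

lemma prob_space_cond_meas:
  assumes [measurable]: "C \<in> sets q" and pos: "measure q C > 0"
  shows "prob_space (cond_meas q C)"
proof
  have fin: "emeasure q C = ennreal (measure q C)"
    using pos by (intro emeasure_eq_ennreal_measure) (auto simp: measure_def)
  have "emeasure (cond_meas q C) (space (cond_meas q C))
      = (\<integral>\<^sup>+ x. ennreal (1 / measure q C) * indicator C x \<partial>q)"
    unfolding cond_meas_def
    by (auto simp: emeasure_density intro!: nn_integral_cong split: split_indicator)
  also have "\<dots> = 1"
    using pos by (simp add: nn_integral_cmult_indicator fin ennreal_mult'[symmetric])
  finally show "emeasure (cond_meas q C) (space (cond_meas q C)) = 1" .
qed

lemma AE_cond_meas:
  assumes [measurable]: "C \<in> sets q"
  shows "AE x in cond_meas q C. x \<in> C"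
  unfolding cond_meas_def by (subst AE_density) (auto simp: indicator_def)

lemma measure_mult_integral_cond_meas:
  fixes f :: "real \<Rightarrow> real"
  assumes [measurable]: "C \<in> sets q" "f \<in> borel_measurable q" and pos: "measure q C \<noteq> 0"
  shows "measure q C * integral\<^sup>L (cond_meas q C) f = (\<integral>x. indicator C x * f x \<partial>q)"
proof -
  have "integral\<^sup>L (cond_meas q C) f = (\<integral>x. indicator C x * f x / measure q C \<partial>q)"
    unfolding cond_meas_def by (subst integral_density) auto
  also have "\<dots> = (\<integral>x. indicator C x * f x \<partial>q) / measure q C"
    by (rule integral_divide_zero)
  finally show ?thesis using pos by simp
qed

lemma integral_split_cond_meas:
  fixes f :: "real \<Rightarrow> real"
  assumes [measurable]: "C1 \<in> sets q" "C2 \<in> sets q" and f: "integrable q f"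
    and disj: "C1 \<inter> C2 = {}" and cover: "AE x in q. x \<in> C1 \<union> C2"
    and pos: "measure q C1 \<noteq> 0" "measure q C2 \<noteq> 0"
  shows "integral\<^sup>L q f
    = measure q C1 * integral\<^sup>L (cond_meas q C1) f + measure q C2 * integral\<^sup>L (cond_meas q C2) f"
proof -
  have [measurable]: "f \<in> borel_measurable q"
    using f by (rule borel_measurable_integrable)
  have "integral\<^sup>L q f = (\<integral>x. indicator C1 x * f x + indicator C2 x * f x \<partial>q)"
    using cover disj by (intro integral_cong_AE) (auto elim!: eventually_mono split: split_indicator)
  also have "\<dots> = (\<integral>x. indicator C1 x * f x \<partial>q) + (\<integral>x. indicator C2 x * f x \<partial>q)"
    using f by (intro Bochner_Integration.integral_add integrable_mult_indicator[where 'b=real, simplified]) auto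
  finally show ?thesis
    using f by (simp add: measure_mult_integral_cond_meas pos)
qed

lemma integrable_exp_neg_mult:
  fixes \<nu> :: "real measure"
  assumes "finite_measure \<nu>" "sets \<nu> = sets borel" "AE r in \<nu>. 0 \<le> r" "0 \<le> d"
  shows "integrable \<nu> (\<lambda>r. exp (- d * r))"
proof (rule finite_measure.integrable_const_bound[where B=1, OF assms(1)])
  show "AE r in \<nu>. norm (exp (- d * r)) \<le> 1"
    using assms(3) by eventually_elim (simp add: \<open>0 \<le> d\<close>)
  show "(\<lambda>r. exp (- d * r)) \<in> borel_measurable \<nu>"
    unfolding measurable_cong_sets[OF assms(2) refl] by measurable
qed

lemma laplace_less_one:
  assumes "prob_space \<nu>" "sets \<nu> = sets borel" "AE r in \<nu>. 0 < r" "0 < d"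
  shows "laplace \<nu> d < 1"
proof -
  have "AE r in \<nu>. 0 \<le> r"
    using assms(3) by eventually_elim simp
  then have "integrable \<nu> (\<lambda>r. exp (- d * r))"
    using assms(1,2,4) by (intro integrable_exp_neg_mult) (simp_all add: prob_space_def)
  moreover have "AE r in \<nu>. exp (- d * r) < 1"
    using assms(3) by eventually_elim (simp add: \<open>0 < d\<close>)
  ultimately show ?thesis
    unfolding laplace_def by (rule prob_space.expectation_less[OF assms(1)])
qed

lemma exp_le_laplace:
  assumes "prob_space \<nu>" "sets \<nu> = sets borel" "AE r in \<nu>. 0 \<le> r \<and> r \<le> a" "0 \<le> d"
  shows "exp (- d * a) \<le> laplace \<nu> d"
proof -
  have "AE r in \<nu>. 0 \<le> r"
    using assms(3) by eventually_elim simp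
  then have "integrable \<nu> (\<lambda>r. exp (- d * r))"
    using assms(1,2,4) by (intro integrable_exp_neg_mult) (simp_all add: prob_space_def)
  moreover have "AE r in \<nu>. exp (- d * a) \<le> exp (- d * r)"
    using assms(3) by eventually_elim (simp add: mult_left_mono \<open>0 \<le> d\<close>)
  ultimately show ?thesis
    unfolding laplace_def by (rule prob_space.integral_ge_const[OF assms(1)])
qed

lemma laplace_le_exp:
  assumes "prob_space \<nu>" "sets \<nu> = sets borel" "AE r in \<nu>. a \<le> r" "0 \<le> a" "0 \<le> d"
  shows "laplace \<nu> d \<le> exp (- d * a)"
proof -
  have "AE r in \<nu>. 0 \<le> r"
    using assms(3) by eventually_elim (use \<open>0 \<le> a\<close> in simp)
  then have "integrable \<nu> (\<lambda>r. exp (- d * r))"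
    using assms(1,2,5) by (intro integrable_exp_neg_mult) (simp_all add: prob_space_def)
  moreover have "AE r in \<nu>. exp (- d * r) \<le> exp (- d * a)"
    using assms(3) by eventually_elim (simp add: mult_left_mono \<open>0 \<le> d\<close>)
  ultimately show ?thesis
    unfolding laplace_def by (rule prob_space.integral_le_const[OF assms(1)])
qed

lemma laplace_cond_meas_Ioc_bounds:
  assumes "sets q = sets borel" "measure q {0<..a} > 0" "0 < d"
  shows "exp (- d * a) \<le> laplace (cond_meas q {0<..a}) d"
    and "laplace (cond_meas q {0<..a}) d < 1"
proof -
  have sets: "{0<..a} \<in> sets q"
    using assms(1) by simp
  have \<nu>: "prob_space (cond_meas q {0<..a})"
    using sets assms(2) by (rule prob_space_cond_meas)
  have "AE r in cond_meas q {0<..a}. 0 < r \<and> r \<le> a"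
    using AE_cond_meas[OF sets] by eventually_elim simp
  then have AE_nonneg: "AE r in cond_meas q {0<..a}. 0 \<le> r \<and> r \<le> a"
    and AE_pos: "AE r in cond_meas q {0<..a}. 0 < r"
    by (auto elim: eventually_mono)
  have sets_\<nu>: "sets (cond_meas q {0<..a}) = sets borel"
    using assms(1) by simp
  show "exp (- d * a) \<le> laplace (cond_meas q {0<..a}) d"
    using exp_le_laplace[OF \<nu> sets_\<nu> AE_nonneg] assms(3) by simp
  show "laplace (cond_meas q {0<..a}) d < 1"
    using laplace_less_one[OF \<nu> sets_\<nu> AE_pos assms(3)] .
qed

lemma laplace_cond_meas_Ioi_le:
  assumes "sets q = sets borel" "measure q {a<..} > 0" "0 \<le> a" "0 \<le> d"
  shows "laplace (cond_meas q {a<..}) d \<le> exp (- d * a)"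
proof -
  have sets: "{a<..} \<in> sets q"
    using assms(1) by simp
  have "AE r in cond_meas q {a<..}. a \<le> r"
    using AE_cond_meas[OF sets] by eventually_elim simp
  then show ?thesis
    using assms(1,3,4) by (intro laplace_le_exp prob_space_cond_meas[OF sets assms(2)]) auto
qed

lemma measure_Ioc_add_Ioi:
  fixes q :: "real measure"
  assumes "prob_space q" "sets q = sets borel" "AE r in q. 0 < r"
  shows "measure q {0<..a} + measure q {a<..} = 1"
proof -
  interpret prob_space q by fact
  have sets: "{0<..a} \<union> {a<..} \<in> sets q"
    using assms(2) by simp
  have "measure q {0<..a} + measure q {a<..} = measure q ({0<..a} \<union> {a<..})"
    using assms(2) by (intro finite_measure_Union[symmetric]) auto
  also have "\<dots> = 1"
    unfolding prob_eq_1[OF sets] using assms(3) by eventually_elim auto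
  finally show ?thesis .
qed

lemma laplace_split_cond_meas:
  assumes "prob_space q" "sets q = sets borel" "AE r in q. 0 < r"
    and "measure q {0<..a} \<noteq> 0" "measure q {a<..} \<noteq> 0" "0 \<le> d"
  shows "laplace q d = measure q {0<..a} * laplace (cond_meas q {0<..a}) d
    + measure q {a<..} * laplace (cond_meas q {a<..}) d"
proof -
  have "AE r in q. 0 \<le> r"
    using assms(3) by eventually_elim simp
  then have "integrable q (\<lambda>r. exp (- d * r))"
    using assms(1,2,6) by (intro integrable_exp_neg_mult) (simp_all add: prob_space_def)
  moreover have "AE r in q. r \<in> {0<..a} \<union> {a<..}"
    using assms(3) by eventually_elim auto
  ultimately show ?thesis
    unfolding laplace_def using assms(2,4,5) by (intro integral_split_cond_meas) auto
qed

lemma mixture_ratio_bounds: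
  fixes p1 p2 L1 L2 d :: real
  assumes "0 \<le> p1" "0 \<le> p2" "p1 + p2 = 1" "L2 \<le> L1" "L1 < 1" "0 \<le> d"
  defines "L \<equiv> p1 * L1 + p2 * L2"
  shows "p1 * (1 - L1) / (1 - L) \<le> p1" "p2 \<le> p2 * (1 - L2) / (1 - L)"
    and "d / (1 - L2) \<le> d / (1 - L)" "d / (1 - L) \<le> d / (1 - L1)"
proof -
  have "L1 - L = p2 * (L1 - L2)" "L - L2 = p1 * (L1 - L2)"
    using \<open>p1 + p2 = 1\<close> unfolding L_def by algebra+
  then have "L2 \<le> L" "L \<le> L1"
    using assms by (metis diff_ge_0_iff_ge zero_le_mult_iff)+
  then have le1: "1 - L1 \<le> 1 - L" and le2: "1 - L \<le> 1 - L2" and pos: "0 < 1 - L"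
    using \<open>L1 < 1\<close> by linarith+
  show "p1 * (1 - L1) / (1 - L) \<le> p1"
    using pos le1 \<open>0 \<le> p1\<close> by (simp add: divide_le_eq mult_left_mono)
  show "p2 \<le> p2 * (1 - L2) / (1 - L)"
    using pos le2 \<open>0 \<le> p2\<close> by (simp add: le_divide_eq mult_left_mono)
  show "d / (1 - L2) \<le> d / (1 - L)"
    using pos le2 \<open>0 \<le> d\<close> by (intro divide_left_mono mult_pos_pos) auto
  show "d / (1 - L) \<le> d / (1 - L1)"
    using pos le1 \<open>0 \<le> d\<close> \<open>L1 < 1\<close> by (intro divide_left_mono mult_pos_pos) auto
qed

theorem corollary2p9:
  fixes q :: "real measure" and rstar d :: real
  assumes prob: "prob_space q"
    and sets_q: "sets q = sets borel"
    and supp: "emeasure q {..0} = 0"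
    and ac_atoms: "\<exists>A. finite A \<and>
        (\<forall>S\<in>sets borel. S \<inter> A = {} \<longrightarrow> emeasure lborel S = 0 \<longrightarrow> emeasure q S = 0)"
    and mean: "integrable q (\<lambda>r. r)"
    and rstar: "rstar > 0"
    and p1pos: "measure q {0<..rstar} > 0"
    and p2pos: "measure q {rstar<..} > 0"
    and d: "d > 0"
  shows
    "let p1 = measure q {0<..rstar}; p2 = measure q {rstar<..};
         q1 = cond_meas q {0<..rstar}; q2 = cond_meas q {rstar<..};
         pi1 = p1 * (1 - laplace q1 d) / (1 - laplace q d);
         pi2 = p2 * (1 - laplace q2 d) / (1 - laplace q d);
         mu_in = d / (1 - laplace q d);
         mu_in1 = d / (1 - laplace q1 d);
         mu_in2 = d / (1 - laplace q2 d)
     in pi1 \<le> p1 \<and> pi2 \<ge> p2 \<and> mu_in2 \<le> mu_in \<and> mu_in \<le> mu_in1"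
proof -
  have "AE r in q. r \<notin> {..0}"
    using supp by (subst AE_iff_null_sets[symmetric]) (simp_all add: null_sets_def sets_q)
  then have pos: "AE r in q. 0 < r"
    by eventually_elim simp
  note weights = measure_Ioc_add_Ioi[OF prob sets_q pos, of rstar]
  have mixture: "laplace q d = measure q {0<..rstar} * laplace (cond_meas q {0<..rstar}) d
      + measure q {rstar<..} * laplace (cond_meas q {rstar<..}) d"
    using p1pos p2pos d by (intro laplace_split_cond_meas[OF prob sets_q pos]) auto
  note L1_bounds = laplace_cond_meas_Ioc_bounds[OF sets_q p1pos d]
  have L2_le_L1: "laplace (cond_meas q {rstar<..}) d \<le> laplace (cond_meas q {0<..rstar}) d"
    using laplace_cond_meas_Ioi_le[OF sets_q p2pos] L1_bounds(1) rstar d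
    by (meson order.trans less_imp_le)
  note bounds = mixture_ratio_bounds[OF measure_nonneg measure_nonneg weights
      L2_le_L1 L1_bounds(2) less_imp_le[OF d]]
  show ?thesis
    unfolding Let_def mixture using bounds by (intro conjI)
qed

end
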